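(* Let $K\subseteq\mathbb R^2$ be a compact set containing no array on three points, let $f\in C(K)$ and $\varepsilon>0$. Then there exist continuous functions $g,h\in C(\mathbb R)$ such that (1) $|f(x,y)-g(x)-h(y)|\le 6\varepsilon$ for all $(x,y)\in K$, and (2) $\|g\|\le\|f\|$ and $\|h\|\le 2\|f\|$.
   Context: An array on three points is a triple $a_1,a_2,a_3$ of points in the plane with $a_1\ne a_2$, $a_2\ne a_3$, such that the segments $[a_1;a_2]$ and $[a_2;a_3]$ are each parallel to a coordinate axis and are mutually orthogonal. $\|\cdot\|$ denotes the supremum norm (on $K$ for $f$, on $\mathbb R$ for $g,h$). *)

theory Defs
  imports "HOL-Analysis.Analysis"
begin

definition vertical_seg :: "real \<times> real \<Rightarrow> real \<times> real \<Rightarrow> bool" where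
  "vertical_seg p q \<longleftrightarrow> p \<noteq> q \<and> fst p = fst q"

definition horizontal_seg :: "real \<times> real \<Rightarrow> real \<times> real \<Rightarrow> bool" where
  "horizontal_seg p q \<longleftrightarrow> p \<noteq> q \<and> snd p = snd q"

definition is_array3 :: "real \<times> real \<Rightarrow> real \<times> real \<Rightarrow> real \<times> real \<Rightarrow> bool" where
  "is_array3 a1 a2 a3 \<longleftrightarrow>
     (vertical_seg a1 a2 \<and> horizontal_seg a2 a3) \<or> (horizontal_seg a1 a2 \<and> vertical_seg a2 a3)"

definition contains_array3 :: "(real \<times> real) set \<Rightarrow> bool" where
  "contains_array3 K \<longleftrightarrow> (\<exists>a1\<in>K. \<exists>a2\<in>K. \<exists>a3\<in>K. is_array3 a1 a2 a3)"

definition sup_norm_on :: "'a set \<Rightarrow> ('a \<Rightarrow> real) \<Rightarrow> real" where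
  "sup_norm_on S f = (if S = {} then 0 else (SUP x\<in>S. \<bar>f x\<bar>))"

end

theory Submission
  imports Defs
begin

text \<open>If K contains no array on three points, then lying on a common horizontal or vertical
  line is an equivalence relation on K, and no point of K has both a vertical and a
  horizontal neighbour. Let \<delta> be a modulus of uniform continuity of f for \<epsilon>. The points of K whose
  vertical fibre has diameter at least \<delta>, and those whose horizontal fibre has, form two disjoint
  closed saturated sets, so Urysohn's lemma for the quotient space gives a weight l, constant on
  classes, that is 0 on the first set and 1 on the second. Then l f oscillates by at most \<epsilon> on
  vertical fibres and (1 - l) f by at most \<epsilon> on horizontal ones. A function on a compact set whose
  oscillation on the fibres of a projection is at most e is, up to any larger error, a continuous
  function of that projection (a clipped Lipschitz upper envelope). This yields g from l f, and
  then h from f - g(x), whose horizontal oscillation is at most 5 \<epsilon>.\<close>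

section \<open>Urysohn's lemma for closed equivalence relations\<close>

text \<open>The quotient topology of X modulo r, carried by X itself: its open sets are the
  r-saturated open sets of X.\<close>

definition saturated_topology :: "'a topology \<Rightarrow> ('a \<times> 'a) set \<Rightarrow> 'a topology" where
  "saturated_topology X r = topology (\<lambda>U. openin X U \<and> r `` U \<subseteq> U)"

lemma openin_saturated_topology:
  "openin (saturated_topology X r) U \<longleftrightarrow> openin X U \<and> r `` U \<subseteq> U"
proof -
  have "istopology (\<lambda>U. openin X U \<and> r `` U \<subseteq> U)"
    unfolding istopology_def by (auto simp: openin_Int openin_Union)
  then show ?thesis
    by (simp add: saturated_topology_def)
qed

lemma topspace_saturated_topology:
  assumes "r \<subseteq> topspace X \<times> topspace X"
  shows "topspace (saturated_topology X r) = topspace X"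
proof
  show "topspace (saturated_topology X r) \<subseteq> topspace X"
    by (metis openin_saturated_topology openin_subset openin_topspace)
  show "topspace X \<subseteq> topspace (saturated_topology X r)"
    using assms by (metis Image_subset openin_saturated_topology openin_subset openin_topspace)
qed

lemma closedin_saturated_topology:
  assumes "equiv (topspace X) r"
  shows "closedin (saturated_topology X r) S \<longleftrightarrow> closedin X S \<and> r `` S \<subseteq> S"
proof -
  have r: "r \<subseteq> topspace X \<times> topspace X" "sym r"
    using assms by (auto simp: equiv_def refl_on_def)
  have "r `` (topspace X - S) \<subseteq> topspace X - S \<longleftrightarrow> r `` S \<subseteq> S" if "S \<subseteq> topspace X"
    using r that unfolding sym_def by blast
  then show ?thesis
    unfolding closedin_def topspace_saturated_topology[OF r(1)] openin_saturated_topology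
    by blast
qed

lemma saturated_openin_between:
  assumes r: "equiv (topspace X) r" and closed_sat: "\<And>F. closedin X F \<Longrightarrow> closedin X (r `` F)"
    and "openin X V" "C \<subseteq> V" "r `` C \<subseteq> C"
  obtains U where "openin X U" "r `` U \<subseteq> U" "C \<subseteq> U" "U \<subseteq> V"
proof -
  have r_top: "r \<subseteq> topspace X \<times> topspace X" and "sym r" "trans r"
    and r_refl: "\<And>p. p \<in> topspace X \<Longrightarrow> (p, p) \<in> r"
    using r by (auto simp: equiv_def refl_on_def)
  define U where "U = topspace X - r `` (topspace X - V)"
  have "openin X U"
    unfolding U_def using \<open>openin X V\<close> by (intro openin_diff closed_sat) auto
  moreover have "r `` U \<subseteq> U"
  proof clarify
    fix p q assume "p \<in> U" "(p, q) \<in> r"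
    then have "(q, p) \<in> r" "q \<in> topspace X"
      using \<open>sym r\<close> r_top by (auto dest: symD)
    with \<open>p \<in> U\<close> \<open>trans r\<close> show "q \<in> U"
      unfolding U_def by (blast dest: transD)
  qed
  moreover have "C \<subseteq> U"
  proof
    fix p assume "p \<in> C"
    have "q \<in> V" if "(q, p) \<in> r" for q
      using that \<open>p \<in> C\<close> \<open>r `` C \<subseteq> C\<close> \<open>sym r\<close> \<open>C \<subseteq> V\<close> by (blast dest: symD)
    then show "p \<in> U"
      unfolding U_def using \<open>p \<in> C\<close> \<open>C \<subseteq> V\<close> openin_subset[OF \<open>openin X V\<close>] by blast
  qed
  moreover have "U \<subseteq> V"
    unfolding U_def using r_refl by blast
  ultimately show ?thesis
    using that by blast
qed

lemma normal_space_saturated_topology: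
  assumes X: "normal_space X" and r: "equiv (topspace X) r"
    and closed_sat: "\<And>F. closedin X F \<Longrightarrow> closedin X (r `` F)"
  shows "normal_space (saturated_topology X r)"
  unfolding normal_space_def
proof clarify
  fix S T
  assume "closedin (saturated_topology X r) S" "closedin (saturated_topology X r) T" "disjnt S T"
  then have S: "closedin X S" "r `` S \<subseteq> S" and T: "closedin X T" "r `` T \<subseteq> T"
    by (simp_all add: closedin_saturated_topology[OF r])
  obtain V W where "openin X V" "openin X W" "S \<subseteq> V" "T \<subseteq> W" "disjnt V W"
    using X S(1) T(1) \<open>disjnt S T\<close> by (metis normal_space_def)
  moreover obtain U where "openin X U" "r `` U \<subseteq> U" "S \<subseteq> U" "U \<subseteq> V"
    using saturated_openin_between[OF r closed_sat \<open>openin X V\<close> \<open>S \<subseteq> V\<close> S(2)] .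
  moreover obtain U' where "openin X U'" "r `` U' \<subseteq> U'" "T \<subseteq> U'" "U' \<subseteq> W"
    using saturated_openin_between[OF r closed_sat \<open>openin X W\<close> \<open>T \<subseteq> W\<close> T(2)] .
  ultimately show "\<exists>U U'. openin (saturated_topology X r) U \<and> openin (saturated_topology X r) U'
           \<and> S \<subseteq> U \<and> T \<subseteq> U' \<and> disjnt U U'"
    unfolding openin_saturated_topology by (meson disjnt_subset1 disjnt_subset2)
qed

lemma Urysohn_lemma_saturated:
  assumes X: "normal_space X" and r: "equiv (topspace X) r"
    and closed_sat: "\<And>F. closedin X F \<Longrightarrow> closedin X (r `` F)"
    and S: "closedin X S" "r `` S \<subseteq> S" and T: "closedin X T" "r `` T \<subseteq> T"
    and "disjnt S T"
  obtains l :: "'a \<Rightarrow> real"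
  where "continuous_map X (top_of_set {0..1}) l" "l ` S \<subseteq> {0}" "l ` T \<subseteq> {1}"
    "\<And>p q. (p, q) \<in> r \<Longrightarrow> l p = l q"
proof -
  let ?Y = "saturated_topology X r"
  have top: "topspace ?Y = topspace X"
    using r by (intro topspace_saturated_topology) (auto simp: equiv_def refl_on_def)
  have "closedin ?Y S" "closedin ?Y T"
    using S T by (simp_all add: closedin_saturated_topology[OF r])
  then obtain l where l: "continuous_map ?Y (top_of_set {0..1::real}) l" "l ` S \<subseteq> {0}" "l ` T \<subseteq> {1}"
    using Urysohn_lemma[OF normal_space_saturated_topology[OF X r closed_sat], of S T 0 1]
      \<open>disjnt S T\<close> by auto
  have cont: "continuous_map X (top_of_set {0..1}) l"
    unfolding continuous_map_def
  proof (intro conjI allI impI)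
    show "l \<in> topspace X \<rightarrow> topspace (top_of_set {0..1})"
      using l(1) top by (simp add: continuous_map_def)
    fix U :: "real set" assume "openin (top_of_set {0..1}) U"
    with l(1) have "openin ?Y {x \<in> topspace ?Y. l x \<in> U}"
      by (rule openin_continuous_map_preimage)
    then show "openin X {x \<in> topspace X. l x \<in> U}"
      by (simp add: top openin_saturated_topology)
  qed
  have const: "l p = l q" if "(p, q) \<in> r" for p q
  proof (rule ccontr)
    assume "l p \<noteq> l q"
    have "continuous_map ?Y euclideanreal l"
      using l(1) by (simp add: continuous_map_in_subtopology)
    then have "openin ?Y {x \<in> topspace ?Y. l x \<in> - {l q}}"
      by (rule openin_continuous_map_preimage) auto
    then have "r `` {x \<in> topspace X. l x \<noteq> l q} \<subseteq> {x \<in> topspace X. l x \<noteq> l q}"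
      by (simp add: top openin_saturated_topology)
    moreover have "p \<in> topspace X"
      using that r unfolding equiv_def refl_on_def by auto
    ultimately show False
      using that \<open>l p \<noteq> l q\<close> by blast
  qed
  show ?thesis
    by (rule that[OF cont l(2,3) const])
qed

section \<open>Approximation by functions of a projection\<close>

lemma uniform_fibre_oscillation:
  fixes \<pi> \<phi> :: "'a::topological_space \<Rightarrow> real"
  assumes K: "compact K" and \<pi>: "continuous_on K \<pi>" and \<phi>: "continuous_on K \<phi>"
    and fibre: "\<And>p q. p \<in> K \<Longrightarrow> q \<in> K \<Longrightarrow> \<pi> p = \<pi> q \<Longrightarrow> \<bar>\<phi> p - \<phi> q\<bar> \<le> e"
    and "e < c"
  obtains r where "r > 0" "\<And>p q. p \<in> K \<Longrightarrow> q \<in> K \<Longrightarrow> \<bar>\<pi> p - \<pi> q\<bar> < r \<Longrightarrow> \<bar>\<phi> p - \<phi> q\<bar> < c"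
proof -
  define Z where "Z = {z \<in> K \<times> K. c \<le> \<bar>\<phi> (fst z) - \<phi> (snd z)\<bar>}"
  have cont_on_pairs: "continuous_on (K \<times> K) (\<lambda>z. \<psi> (fst z))" "continuous_on (K \<times> K) (\<lambda>z. \<psi> (snd z))"
    if "continuous_on K \<psi>" for \<psi> :: "'a \<Rightarrow> real"
    using that by (auto intro!: continuous_on_compose2[OF that] continuous_intros)
  have "closedin (top_of_set (K \<times> K)) ((K \<times> K) \<inter> (\<lambda>z. \<bar>\<phi> (fst z) - \<phi> (snd z)\<bar>) -` {c..})"
    using cont_on_pairs[OF \<phi>] by (intro continuous_closedin_preimage continuous_intros) auto
  moreover have "Z = (K \<times> K) \<inter> (\<lambda>z. \<bar>\<phi> (fst z) - \<phi> (snd z)\<bar>) -` {c..}"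
    by (auto simp: Z_def)
  ultimately have "compact Z"
    using closedin_compact[OF compact_Times[OF K K]] by simp
  show ?thesis
  proof (cases "Z = {}")
    case True
    show ?thesis
      by (rule that[of 1]) (use True in \<open>force simp: Z_def\<close>)+
  next
    case False
    have "continuous_on Z (\<lambda>z. \<bar>\<pi> (fst z) - \<pi> (snd z)\<bar>)"
      using cont_on_pairs[OF \<pi>] by (intro continuous_intros) (auto intro: continuous_on_subset simp: Z_def)
    then obtain z where z: "z \<in> Z"
      and z_min: "\<And>w. w \<in> Z \<Longrightarrow> \<bar>\<pi> (fst z) - \<pi> (snd z)\<bar> \<le> \<bar>\<pi> (fst w) - \<pi> (snd w)\<bar>"
      using continuous_attains_inf[OF \<open>compact Z\<close> False] by blast
    have "\<pi> (fst z) \<noteq> \<pi> (snd z)"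
      using z fibre[of "fst z" "snd z"] \<open>e < c\<close> by (auto simp: Z_def)
    then show ?thesis
    proof (intro that[of "\<bar>\<pi> (fst z) - \<pi> (snd z)\<bar>"])
      fix p q assume "p \<in> K" "q \<in> K" "\<bar>\<pi> p - \<pi> q\<bar> < \<bar>\<pi> (fst z) - \<pi> (snd z)\<bar>"
      then show "\<bar>\<phi> p - \<phi> q\<bar> < c"
        using z_min[of "(p, q)"] by (force simp: Z_def)
    qed simp
  qed
qed

lemma lipschitz_SUP_cones:
  fixes \<pi> \<phi> :: "'a \<Rightarrow> real"
  assumes "K \<noteq> {}" "bdd_above (\<phi> ` K)" "0 \<le> L"
  shows "L-lipschitz_on UNIV (\<lambda>y. SUP p\<in>K. \<phi> p - L * \<bar>y - \<pi> p\<bar>)"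
proof -
  let ?G = "\<lambda>y. SUP p\<in>K. \<phi> p - L * \<bar>y - \<pi> p\<bar>"
  obtain M where M: "\<And>p. p \<in> K \<Longrightarrow> \<phi> p \<le> M"
    using assms(2) by (auto simp: bdd_above_def)
  have bdd: "bdd_above ((\<lambda>p. \<phi> p - L * \<bar>y - \<pi> p\<bar>) ` K)" for y
    using M assms(3) by (intro bdd_aboveI2[of _ _ M]) (smt (verit) mult_nonneg_nonneg abs_ge_zero)
  have shift: "?G y \<le> ?G y' + L * \<bar>y - y'\<bar>" for y y'
  proof (rule cSUP_least[OF assms(1)])
    fix p assume "p \<in> K"
    have "L * \<bar>y' - \<pi> p\<bar> \<le> L * \<bar>y - \<pi> p\<bar> + L * \<bar>y - y'\<bar>"
      using assms(3) by (simp add: distrib_left[symmetric] mult_left_mono)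
    moreover have "\<phi> p - L * \<bar>y' - \<pi> p\<bar> \<le> ?G y'"
      using \<open>p \<in> K\<close> bdd by (rule cSUP_upper)
    ultimately show "\<phi> p - L * \<bar>y - \<pi> p\<bar> \<le> ?G y' + L * \<bar>y - y'\<bar>"
      by linarith
  qed
  show ?thesis
  proof (rule lipschitz_onI)
    fix y y' :: real
    show "dist (?G y) (?G y') \<le> L * dist y y'"
      using shift[of y y'] shift[of y' y] by (simp add: dist_real_def abs_minus_commute)
  qed (use assms(3) in simp)
qed

lemma SUP_cones_close:
  fixes \<pi> \<phi> :: "'a \<Rightarrow> real"
  assumes "p \<in> K" "0 \<le> L" "0 \<le> c" "2 * B \<le> L * r"
    and bound: "\<And>q. q \<in> K \<Longrightarrow> \<bar>\<phi> q\<bar> \<le> B"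
    and near: "\<And>q. q \<in> K \<Longrightarrow> \<bar>\<pi> p - \<pi> q\<bar> < r \<Longrightarrow> \<bar>\<phi> p - \<phi> q\<bar> < c"
  shows "\<bar>(SUP q\<in>K. \<phi> q - L * \<bar>\<pi> p - \<pi> q\<bar>) - \<phi> p\<bar> \<le> c"
proof -
  have "bdd_above ((\<lambda>q. \<phi> q - L * \<bar>\<pi> p - \<pi> q\<bar>) ` K)"
    using bound \<open>0 \<le> L\<close> by (intro bdd_aboveI2[of _ _ B]) (smt (verit) mult_nonneg_nonneg abs_ge_zero)
  then have "\<phi> p \<le> (SUP q\<in>K. \<phi> q - L * \<bar>\<pi> p - \<pi> q\<bar>)"
    using cSUP_upper[OF \<open>p \<in> K\<close>] by fastforce
  moreover have "(SUP q\<in>K. \<phi> q - L * \<bar>\<pi> p - \<pi> q\<bar>) \<le> \<phi> p + c"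
  proof (rule cSUP_least)
    fix q assume "q \<in> K"
    show "\<phi> q - L * \<bar>\<pi> p - \<pi> q\<bar> \<le> \<phi> p + c"
    proof (cases "\<bar>\<pi> p - \<pi> q\<bar> < r")
      case True
      then show ?thesis
        using near[OF \<open>q \<in> K\<close>] \<open>0 \<le> L\<close> by (smt (verit) mult_nonneg_nonneg abs_ge_zero)
    next
      case False
      then have "2 * B \<le> L * \<bar>\<pi> p - \<pi> q\<bar>"
        using \<open>0 \<le> L\<close> \<open>2 * B \<le> L * r\<close> by (meson mult_left_mono not_less order_trans)
      then show ?thesis
        using bound[OF \<open>p \<in> K\<close>] bound[OF \<open>q \<in> K\<close>] \<open>0 \<le> c\<close> by linarith
    qed
  qed (use \<open>p \<in> K\<close> in blast)
  ultimately show ?thesis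
    by linarith
qed

lemma approximation_through_projection:
  fixes \<pi> \<phi> :: "'a::topological_space \<Rightarrow> real"
  assumes K: "compact K" and \<pi>: "continuous_on K \<pi>" and \<phi>: "continuous_on K \<phi>"
    and bound: "0 \<le> B" "\<And>p. p \<in> K \<Longrightarrow> \<bar>\<phi> p\<bar> \<le> B"
    and fibre: "\<And>p q. p \<in> K \<Longrightarrow> q \<in> K \<Longrightarrow> \<pi> p = \<pi> q \<Longrightarrow> \<bar>\<phi> p - \<phi> q\<bar> \<le> e"
    and "e < c"
  obtains G where "continuous_on UNIV G" "\<And>y. \<bar>G y\<bar> \<le> B" "\<And>p. p \<in> K \<Longrightarrow> \<bar>G (\<pi> p) - \<phi> p\<bar> \<le> c"
proof (cases "K = {}")
  case True
  show ?thesis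
    by (rule that[of "\<lambda>_. 0"]) (use True bound(1) in auto)
next
  case False
  then obtain p0 where "p0 \<in> K"
    by blast
  have "0 \<le> c"
    using fibre[OF \<open>p0 \<in> K\<close> \<open>p0 \<in> K\<close>] \<open>e < c\<close> by linarith
  obtain r where "r > 0"
    and r: "\<And>p q. p \<in> K \<Longrightarrow> q \<in> K \<Longrightarrow> \<bar>\<pi> p - \<pi> q\<bar> < r \<Longrightarrow> \<bar>\<phi> p - \<phi> q\<bar> < c"
    using uniform_fibre_oscillation[OF K \<pi> \<phi> fibre \<open>e < c\<close>] by blast
  \<comment> \<open>The slope is steep enough that points farther than r away never raise the envelope.\<close>
  define L where "L = 2 * B / r"
  have "0 \<le> L" "L * r = 2 * B"
    using \<open>r > 0\<close> bound(1) by (auto simp: L_def)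
  define G0 where "G0 = (\<lambda>y. SUP p\<in>K. \<phi> p - L * \<bar>y - \<pi> p\<bar>)"
  have "bdd_above (\<phi> ` K)"
    using bound(2) by (intro bdd_aboveI2[of _ _ B]) (simp add: abs_le_iff)
  then have "L-lipschitz_on UNIV G0"
    unfolding G0_def by (rule lipschitz_SUP_cones[OF False _ \<open>0 \<le> L\<close>])
  have G0_close: "\<bar>G0 (\<pi> p) - \<phi> p\<bar> \<le> c" if "p \<in> K" for p
    unfolding G0_def using that \<open>0 \<le> L\<close> \<open>0 \<le> c\<close> \<open>L * r = 2 * B\<close> bound(2) r[OF that]
    by (intro SUP_cones_close) auto
  show ?thesis
  proof (rule that[of "\<lambda>y. max (- B) (min B (G0 y))"])
    show "continuous_on UNIV (\<lambda>y. max (- B) (min B (G0 y)))"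
      using lipschitz_on_continuous_on[OF \<open>L-lipschitz_on UNIV G0\<close>]
      by (intro continuous_intros)
    show "\<bar>max (- B) (min B (G0 y))\<bar> \<le> B" for y
      using bound(1) by linarith
    show "\<bar>max (- B) (min B (G0 (\<pi> p))) - \<phi> p\<bar> \<le> c" if "p \<in> K" for p
      using G0_close[OF that] bound(2)[OF that] by linarith
  qed
qed

section \<open>Compact sets without arrays\<close>

definition aligned_pairs :: "(real \<times> real) set \<Rightarrow> ((real \<times> real) \<times> (real \<times> real)) set" where
  "aligned_pairs K = {(p, q) \<in> K \<times> K. fst p = fst q \<or> snd p = snd q}"

lemma array_free_no_cross:
  assumes "\<not> contains_array3 K" "p \<in> K" "u \<in> K" "v \<in> K"
    and "u \<noteq> p" "fst u = fst p" "v \<noteq> p" "snd v = snd p"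
  shows False
proof -
  have "is_array3 u p v"
    using assms(5-8) by (auto simp: is_array3_def vertical_seg_def horizontal_seg_def)
  then show False
    using assms(1-4) by (auto simp: contains_array3_def)
qed

lemma equiv_aligned_pairs:
  assumes no_array: "\<not> contains_array3 K"
  shows "equiv K (aligned_pairs K)"
  unfolding equiv_def
proof (intro conjI)
  show "aligned_pairs K \<subseteq> K \<times> K" "refl_on K (aligned_pairs K)" "sym (aligned_pairs K)"
    unfolding aligned_pairs_def by (auto intro: refl_onI symI)
  show "trans (aligned_pairs K)"
  proof (rule transI)
    fix p q r assume "(p, q) \<in> aligned_pairs K" "(q, r) \<in> aligned_pairs K"
    then have "p \<in> K" "q \<in> K" "r \<in> K"
      and pq: "fst p = fst q \<or> snd p = snd q" and qr: "fst q = fst r \<or> snd q = snd r"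
      by (auto simp: aligned_pairs_def)
    have "fst p = fst r \<or> snd p = snd r"
    proof (cases "p = q \<or> q = r")
      case True
      then show ?thesis
        using pq qr by auto
    next
      case False
      then show ?thesis
        using pq qr array_free_no_cross[OF no_array \<open>q \<in> K\<close> \<open>p \<in> K\<close> \<open>r \<in> K\<close>]
          array_free_no_cross[OF no_array \<open>q \<in> K\<close> \<open>r \<in> K\<close> \<open>p \<in> K\<close>]
        by auto
    qed
    then show "(p, r) \<in> aligned_pairs K"
      using \<open>p \<in> K\<close> \<open>r \<in> K\<close> by (simp add: aligned_pairs_def)
  qed
qed

lemma closedin_aligned_pairs_Image:
  assumes K: "compact K" and F: "closedin (top_of_set K) F"
  shows "closedin (top_of_set K) (aligned_pairs K `` F)"
proof -
  have "compact F"
    using closedin_compact[OF K F] .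
  then have "closed (fst ` F \<times> UNIV \<union> UNIV \<times> snd ` F)"
    by (intro closed_Un closed_Times compact_imp_closed compact_continuous_image continuous_intros) auto
  moreover have "aligned_pairs K `` F = K \<inter> (fst ` F \<times> UNIV \<union> UNIV \<times> snd ` F)"
    using closedin_subset[OF F] unfolding aligned_pairs_def by force
  ultimately show ?thesis
    by (simp add: closedin_closed_Int)
qed

definition wide_fibres :: "('a::metric_space \<Rightarrow> 'b) \<Rightarrow> real \<Rightarrow> 'a set \<Rightarrow> 'a set" where
  "wide_fibres \<pi> \<delta> K = {p \<in> K. \<exists>a\<in>K. \<exists>b\<in>K. \<pi> a = \<pi> p \<and> \<pi> b = \<pi> p \<and> \<delta> \<le> dist a b}"

lemma closedin_wide_fibres:
  fixes \<pi> :: "'a::metric_space \<Rightarrow> 'b::metric_space"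
  assumes K: "compact K" and \<pi>: "continuous_on K \<pi>"
  shows "closedin (top_of_set K) (wide_fibres \<pi> \<delta> K)"
proof -
  define W where "W = {z \<in> K \<times> K. \<pi> (fst z) = \<pi> (snd z) \<and> \<delta> \<le> dist (fst z) (snd z)}"
  have \<pi>_pairs: "continuous_on (K \<times> K) (\<lambda>z. \<pi> (fst z))" "continuous_on (K \<times> K) (\<lambda>z. \<pi> (snd z))"
    by (auto intro!: continuous_on_compose2[OF \<pi>] continuous_intros)
  have "closedin (top_of_set (K \<times> K)) ((K \<times> K) \<inter> (\<lambda>z. dist (\<pi> (fst z)) (\<pi> (snd z))) -` {0})"
    using \<pi>_pairs by (intro continuous_closedin_preimage continuous_intros) simp_all
  moreover have "closedin (top_of_set (K \<times> K)) ((K \<times> K) \<inter> (\<lambda>z. dist (fst z) (snd z)) -` {\<delta>..})"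
    by (intro continuous_closedin_preimage continuous_intros closed_atLeast)
  moreover have "W = ((K \<times> K) \<inter> (\<lambda>z. dist (\<pi> (fst z)) (\<pi> (snd z))) -` {0})
      \<inter> ((K \<times> K) \<inter> (\<lambda>z. dist (fst z) (snd z)) -` {\<delta>..})"
    by (auto simp: W_def)
  ultimately have "compact W"
    by (simp add: closedin_Int closedin_compact[OF compact_Times[OF K K]])
  then have "closed ((\<lambda>z. \<pi> (fst z)) ` W)"
    using \<pi>_pairs(1) by (intro compact_imp_closed compact_continuous_image)
      (auto intro: continuous_on_subset simp: W_def)
  then have "closedin (top_of_set K) (K \<inter> \<pi> -` ((\<lambda>z. \<pi> (fst z)) ` W))"
    using \<pi> by (rule continuous_closedin_preimage[rotated])
  moreover have "wide_fibres \<pi> \<delta> K = K \<inter> \<pi> -` ((\<lambda>z. \<pi> (fst z)) ` W)"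
  proof (intro set_eqI iffI)
    fix p assume "p \<in> wide_fibres \<pi> \<delta> K"
    then obtain a b where "p \<in> K" "a \<in> K" "b \<in> K" "\<pi> a = \<pi> p" "\<pi> b = \<pi> p" "\<delta> \<le> dist a b"
      by (auto simp: wide_fibres_def)
    then have "p \<in> K" "(a, b) \<in> W" "\<pi> p = \<pi> (fst (a, b))"
      by (auto simp: W_def)
    then show "p \<in> K \<inter> \<pi> -` ((\<lambda>z. \<pi> (fst z)) ` W)"
      by blast
  next
    fix p assume "p \<in> K \<inter> \<pi> -` ((\<lambda>z. \<pi> (fst z)) ` W)"
    then obtain a b where "p \<in> K" "a \<in> K" "b \<in> K" "\<pi> a = \<pi> p" "\<pi> b = \<pi> p" "\<delta> \<le> dist a b"
      by (auto simp: W_def)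
    then show "p \<in> wide_fibres \<pi> \<delta> K"
      unfolding wide_fibres_def by blast
  qed
  ultimately show ?thesis
    by simp
qed

lemma wide_fibres_neighbour:
  assumes "\<delta> > 0" "p \<in> wide_fibres \<pi> \<delta> K"
  obtains u where "u \<in> K" "u \<noteq> p" "\<pi> u = \<pi> p"
proof -
  obtain a b where "a \<in> K" "b \<in> K" "\<pi> a = \<pi> p" "\<pi> b = \<pi> p" "\<delta> \<le> dist a b"
    using assms(2) by (auto simp: wide_fibres_def)
  moreover have "a \<noteq> b"
    using \<open>\<delta> \<le> dist a b\<close> \<open>\<delta> > 0\<close> by auto
  ultimately show ?thesis
    using that by (cases "a = p") auto
qed

lemma wide_fibres_same_fibre:
  assumes "p \<in> wide_fibres \<pi> \<delta> K" "q \<in> K" "\<pi> q = \<pi> p"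
  shows "q \<in> wide_fibres \<pi> \<delta> K"
  using assms unfolding wide_fibres_def by auto

lemma dist_less_outside_wide_fibres:
  assumes "p \<in> K" "q \<in> K" "\<pi> q = \<pi> p" "p \<notin> wide_fibres \<pi> \<delta> K"
  shows "dist p q < \<delta>"
proof (rule ccontr)
  assume "\<not> dist p q < \<delta>"
  then have "p \<in> wide_fibres \<pi> \<delta> K"
    using assms(1-3) unfolding wide_fibres_def by (auto simp: not_less)
  with assms(4) show False ..
qed

lemma aligned_pairs_Image_wide_fibres:
  assumes no_array: "\<not> contains_array3 K" and "\<delta> > 0" and \<pi>: "\<pi> = fst \<or> \<pi> = snd"
  shows "aligned_pairs K `` wide_fibres \<pi> \<delta> K \<subseteq> wide_fibres \<pi> \<delta> K"
proof clarify
  fix p q assume p: "p \<in> wide_fibres \<pi> \<delta> K" and pq: "(p, q) \<in> aligned_pairs K"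
  then obtain u where "u \<in> K" "u \<noteq> p" "\<pi> u = \<pi> p"
    using wide_fibres_neighbour[OF \<open>\<delta> > 0\<close>] by blast
  have "p \<in> K" "q \<in> K"
    using pq by (auto simp: aligned_pairs_def)
  have "\<pi> q = \<pi> p"
  proof (rule ccontr)
    assume "\<pi> q \<noteq> \<pi> p"
    then have "q \<noteq> p"
      by blast
    from \<pi> show False
    proof
      assume "\<pi> = fst"
      then have "snd q = snd p"
        using pq \<open>\<pi> q \<noteq> \<pi> p\<close> by (auto simp: aligned_pairs_def)
      then show False
        using array_free_no_cross[OF no_array \<open>p \<in> K\<close> \<open>u \<in> K\<close> \<open>q \<in> K\<close>]
          \<open>u \<noteq> p\<close> \<open>\<pi> u = \<pi> p\<close> \<open>\<pi> = fst\<close> \<open>q \<noteq> p\<close> by simp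
    next
      assume "\<pi> = snd"
      then have "fst q = fst p"
        using pq \<open>\<pi> q \<noteq> \<pi> p\<close> by (auto simp: aligned_pairs_def)
      then show False
        using array_free_no_cross[OF no_array \<open>p \<in> K\<close> \<open>q \<in> K\<close> \<open>u \<in> K\<close>]
          \<open>u \<noteq> p\<close> \<open>\<pi> u = \<pi> p\<close> \<open>\<pi> = snd\<close> \<open>q \<noteq> p\<close> by simp
    qed
  qed
  then show "q \<in> wide_fibres \<pi> \<delta> K"
    by (rule wide_fibres_same_fibre[OF p \<open>q \<in> K\<close>])
qed

lemma disjnt_wide_fibres:
  assumes "\<not> contains_array3 K" "\<delta> > 0"
  shows "disjnt (wide_fibres fst \<delta> K) (wide_fibres snd \<delta> K)"
proof -
  have False if p: "p \<in> wide_fibres fst \<delta> K" "p \<in> wide_fibres snd \<delta> K" for p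
  proof -
    obtain u where "u \<in> K" "u \<noteq> p" "fst u = fst p"
      using wide_fibres_neighbour[OF \<open>\<delta> > 0\<close> p(1)] by blast
    moreover obtain v where "v \<in> K" "v \<noteq> p" "snd v = snd p"
      using wide_fibres_neighbour[OF \<open>\<delta> > 0\<close> p(2)] by blast
    moreover have "p \<in> K"
      using p(1) by (simp add: wide_fibres_def)
    ultimately show False
      using array_free_no_cross[OF assms(1)] by blast
  qed
  then show ?thesis
    by (auto simp: disjnt_iff)
qed

lemma array_free_Urysohn:
  assumes K: "compact K" and no_array: "\<not> contains_array3 K" and "\<delta> > 0"
  obtains l :: "real \<times> real \<Rightarrow> real"
  where "continuous_on K l" "\<And>p. p \<in> K \<Longrightarrow> 0 \<le> l p \<and> l p \<le> 1"
    "\<And>p. p \<in> wide_fibres fst \<delta> K \<Longrightarrow> l p = 0" "\<And>p. p \<in> wide_fibres snd \<delta> K \<Longrightarrow> l p = 1"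
    "\<And>p q. p \<in> K \<Longrightarrow> q \<in> K \<Longrightarrow> fst p = fst q \<or> snd p = snd q \<Longrightarrow> l p = l q"
proof -
  let ?X = "top_of_set K"
  have normal: "normal_space ?X"
    by (simp add: metrizable_imp_normal_space metrizable_space_subtopology metrizable_space_euclidean)
  have equiv: "equiv (topspace ?X) (aligned_pairs K)"
    using equiv_aligned_pairs[OF no_array] by simp
  have C: "closedin ?X (wide_fibres \<pi> \<delta> K)" "aligned_pairs K `` wide_fibres \<pi> \<delta> K \<subseteq> wide_fibres \<pi> \<delta> K"
    if "\<pi> = fst \<or> \<pi> = snd" for \<pi>
    using that closedin_wide_fibres[OF K continuous_on_fst[OF continuous_on_id]]
      closedin_wide_fibres[OF K continuous_on_snd[OF continuous_on_id]]
      aligned_pairs_Image_wide_fibres[OF no_array \<open>\<delta> > 0\<close> that]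
    by auto
  obtain l :: "real \<times> real \<Rightarrow> real"
    where l: "continuous_map ?X (top_of_set {0..1}) l"
      "l ` wide_fibres fst \<delta> K \<subseteq> {0}" "l ` wide_fibres snd \<delta> K \<subseteq> {1}"
      "\<And>p q. (p, q) \<in> aligned_pairs K \<Longrightarrow> l p = l q"
    by (rule Urysohn_lemma_saturated[OF normal equiv closedin_aligned_pairs_Image[OF K]
          C[of fst] C[of snd] disjnt_wide_fibres[OF no_array \<open>\<delta> > 0\<close>]]) simp_all
  show ?thesis
  proof (rule that)
    show "continuous_on K l" "\<And>p. p \<in> K \<Longrightarrow> 0 \<le> l p \<and> l p \<le> 1"
      using l(1) by (auto simp: continuous_map_in_subtopology)
  qed (use l(2-4) in \<open>auto simp: aligned_pairs_def\<close>)
qed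

lemma abs_mult_diff_le:
  fixes c x y e :: real
  assumes "0 \<le> c" "c \<le> 1" "\<bar>x - y\<bar> \<le> e"
  shows "\<bar>c * x - c * y\<bar> \<le> e"
proof -
  have "\<bar>c * x - c * y\<bar> = c * \<bar>x - y\<bar>"
    using assms(1) by (simp add: abs_mult right_diff_distrib[symmetric])
  also have "\<dots> \<le> \<bar>x - y\<bar>"
    using assms(1,2) by (simp add: mult_left_le_one_le)
  finally show ?thesis
    using assms(3) by linarith
qed

lemma array_free_splitting:
  fixes f :: "real \<times> real \<Rightarrow> real"
  assumes K: "compact K" and no_array: "\<not> contains_array3 K" and f: "continuous_on K f"
    and "\<epsilon> > 0"
  obtains l :: "real \<times> real \<Rightarrow> real"
  where "continuous_on K l" "\<And>p. p \<in> K \<Longrightarrow> 0 \<le> l p \<and> l p \<le> 1"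
    "\<And>p q. p \<in> K \<Longrightarrow> q \<in> K \<Longrightarrow> fst p = fst q \<Longrightarrow> \<bar>l p * f p - l q * f q\<bar> \<le> \<epsilon>"
    "\<And>p q. p \<in> K \<Longrightarrow> q \<in> K \<Longrightarrow> snd p = snd q \<Longrightarrow> \<bar>(1 - l p) * f p - (1 - l q) * f q\<bar> \<le> \<epsilon>"
proof -
  obtain \<delta> where "\<delta> > 0" and \<delta>: "\<forall>p\<in>K. \<forall>q\<in>K. dist p q < \<delta> \<longrightarrow> dist (f p) (f q) < \<epsilon>"
    using compact_uniformly_continuous[OF f K] \<open>\<epsilon> > 0\<close> unfolding uniformly_continuous_on_def by blast
  obtain l :: "real \<times> real \<Rightarrow> real"
    where l: "continuous_on K l" "\<And>p. p \<in> K \<Longrightarrow> 0 \<le> l p \<and> l p \<le> 1"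
      "\<And>p. p \<in> wide_fibres fst \<delta> K \<Longrightarrow> l p = 0" "\<And>p. p \<in> wide_fibres snd \<delta> K \<Longrightarrow> l p = 1"
      "\<And>p q. p \<in> K \<Longrightarrow> q \<in> K \<Longrightarrow> fst p = fst q \<or> snd p = snd q \<Longrightarrow> l p = l q"
    using array_free_Urysohn[OF K no_array \<open>\<delta> > 0\<close>] by blast
  \<comment> \<open>On a wide fibre the weight vanishes; on any other fibre f itself oscillates by less than \<epsilon>.\<close>
  have fibre: "\<bar>w p * f p - w q * f q\<bar> \<le> \<epsilon>"
    if "p \<in> K" "q \<in> K" "\<pi> q = \<pi> p"
      and "\<And>p. p \<in> K \<Longrightarrow> 0 \<le> w p \<and> w p \<le> 1" "w q = w p" "\<And>p. p \<in> wide_fibres \<pi> \<delta> K \<Longrightarrow> w p = 0"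
    for \<pi> :: "real \<times> real \<Rightarrow> real" and w p q
  proof (cases "p \<in> wide_fibres \<pi> \<delta> K")
    case True
    then have "q \<in> wide_fibres \<pi> \<delta> K"
      using that(2,3) by (rule wide_fibres_same_fibre)
    then show ?thesis
      using True that(6) \<open>\<epsilon> > 0\<close> by simp
  next
    case False
    then have "\<bar>f p - f q\<bar> \<le> \<epsilon>"
      using \<delta> that(1,2) dist_less_outside_wide_fibres[OF that(1-3) False]
      by (simp add: dist_real_def less_imp_le)
    then show ?thesis
      using abs_mult_diff_le[of "w p" "f p" "f q"] that(1,4,5) by simp
  qed
  show ?thesis
  proof (rule that[OF l(1,2)])
    fix p q assume pq: "p \<in> K" "q \<in> K"
    show "\<bar>l p * f p - l q * f q\<bar> \<le> \<epsilon>" if "fst p = fst q"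
      using fibre[of p q fst l] pq that l(2,3) l(5)[of q p] by simp
    show "\<bar>(1 - l p) * f p - (1 - l q) * f q\<bar> \<le> \<epsilon>" if "snd p = snd q"
      using fibre[of p q snd "\<lambda>p. 1 - l p"] pq that l(2,4) l(5)[of q p] by simp
  qed
qed

lemma abs_le_sup_norm_on:
  assumes "bdd_above ((\<lambda>x. \<bar>f x\<bar>) ` S)" "x \<in> S"
  shows "\<bar>f x\<bar> \<le> sup_norm_on S f"
  using assms unfolding sup_norm_on_def by (auto intro: cSUP_upper)

lemma sup_norm_on_nonneg:
  assumes "bdd_above ((\<lambda>x. \<bar>f x\<bar>) ` S)"
  shows "0 \<le> sup_norm_on S f"
proof (cases "S = {}")
  case False
  then obtain x where "x \<in> S"
    by blast
  then show ?thesis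
    using abs_le_sup_norm_on[OF assms] abs_ge_zero order_trans by blast
qed (simp add: sup_norm_on_def)

lemma sup_norm_on_le:
  assumes "S \<noteq> {}" "\<And>x. x \<in> S \<Longrightarrow> \<bar>f x\<bar> \<le> B"
  shows "sup_norm_on S f \<le> B"
  using assms by (simp add: sup_norm_on_def cSUP_least)

lemma array_free_approximation:
  fixes f :: "real \<times> real \<Rightarrow> real"
  assumes K: "compact K" and no_array: "\<not> contains_array3 K" and f: "continuous_on K f"
    and "\<epsilon> > 0" and "0 \<le> M" and f_le: "\<And>p. p \<in> K \<Longrightarrow> \<bar>f p\<bar> \<le> M"
  obtains g h :: "real \<Rightarrow> real"
  where "continuous_on UNIV g" "continuous_on UNIV h" "\<And>x. \<bar>g x\<bar> \<le> M" "\<And>y. \<bar>h y\<bar> \<le> 2 * M"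
    "\<And>p. p \<in> K \<Longrightarrow> \<bar>f p - g (fst p) - h (snd p)\<bar> \<le> 6 * \<epsilon>"
proof -
  obtain l where l: "continuous_on K l" "\<And>p. p \<in> K \<Longrightarrow> 0 \<le> l p \<and> l p \<le> 1"
    "\<And>p q. p \<in> K \<Longrightarrow> q \<in> K \<Longrightarrow> fst p = fst q \<Longrightarrow> \<bar>l p * f p - l q * f q\<bar> \<le> \<epsilon>"
    "\<And>p q. p \<in> K \<Longrightarrow> q \<in> K \<Longrightarrow> snd p = snd q \<Longrightarrow> \<bar>(1 - l p) * f p - (1 - l q) * f q\<bar> \<le> \<epsilon>"
    using array_free_splitting[OF K no_array f \<open>\<epsilon> > 0\<close>] by blast
  have lf_le: "\<bar>l p * f p\<bar> \<le> M" if "p \<in> K" for p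
    using abs_mult_diff_le[of "l p" "f p" 0 M] l(2)[OF that] f_le[OF that] by simp
  obtain g where g: "continuous_on UNIV g" "\<And>x. \<bar>g x\<bar> \<le> M"
    "\<And>p. p \<in> K \<Longrightarrow> \<bar>g (fst p) - l p * f p\<bar> \<le> 2 * \<epsilon>"
  proof (rule approximation_through_projection[of K fst "\<lambda>p. l p * f p" M \<epsilon> "2 * \<epsilon>"])
    show "continuous_on K (\<lambda>p. l p * f p)"
      using l(1) f by (intro continuous_intros)
  qed (use K l(3) lf_le \<open>0 \<le> M\<close> \<open>\<epsilon> > 0\<close> in \<open>auto intro: continuous_intros that\<close>)
  have osc: "\<bar>(f p - g (fst p)) - (f q - g (fst q))\<bar> \<le> 5 * \<epsilon>"
    if "p \<in> K" "q \<in> K" "snd p = snd q" for p q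
  proof -
    have "(f p - g (fst p)) - (f q - g (fst q))
        = ((1 - l p) * f p - (1 - l q) * f q) - (g (fst p) - l p * f p) + (g (fst q) - l q * f q)"
      by (simp add: algebra_simps)
    then show ?thesis
      using l(4)[OF that] g(3)[OF that(1)] g(3)[OF that(2)] by linarith
  qed
  have f_minus_g_le: "\<bar>f p - g (fst p)\<bar> \<le> 2 * M" if "p \<in> K" for p
    using f_le[OF that] g(2)[of "fst p"] by linarith
  obtain h where h: "continuous_on UNIV h" "\<And>y. \<bar>h y\<bar> \<le> 2 * M"
    "\<And>p. p \<in> K \<Longrightarrow> \<bar>h (snd p) - (f p - g (fst p))\<bar> \<le> 6 * \<epsilon>"
  proof (rule approximation_through_projection[of K snd "\<lambda>p. f p - g (fst p)" "2 * M" "5 * \<epsilon>" "6 * \<epsilon>"])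
    show "continuous_on K (\<lambda>p. f p - g (fst p))"
      using f by (intro continuous_intros continuous_on_compose2[OF g(1)]) auto
  qed (use K osc f_minus_g_le \<open>0 \<le> M\<close> \<open>\<epsilon> > 0\<close> in \<open>auto intro: continuous_intros that\<close>)
  show ?thesis
  proof (rule that[OF g(1) h(1) g(2) h(2)])
    show "\<bar>f p - g (fst p) - h (snd p)\<bar> \<le> 6 * \<epsilon>" if "p \<in> K" for p
      using h(3)[OF that] by linarith
  qed
qed

theorem mainTheorem6:
  fixes K :: "(real \<times> real) set" and f :: "real \<times> real \<Rightarrow> real" and \<epsilon> :: real
  assumes "compact K" and "\<not> contains_array3 K" and "continuous_on K f" and "\<epsilon> > 0"
  shows "\<exists>g h :: real \<Rightarrow> real. continuous_on UNIV g \<and> continuous_on UNIV h \<and>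
           (\<forall>(x, y)\<in>K. \<bar>f (x, y) - g x - h y\<bar> \<le> 6 * \<epsilon>) \<and>
           bounded (range g) \<and> bounded (range h) \<and>
           sup_norm_on UNIV g \<le> sup_norm_on K f \<and>
           sup_norm_on UNIV h \<le> 2 * sup_norm_on K f"
proof -
  define M where "M = sup_norm_on K f"
  have "bdd_above ((\<lambda>p. \<bar>f p\<bar>) ` K)"
    using compact_continuous_image[OF continuous_on_rabs[OF assms(3)] assms(1)]
    by (simp add: bounded_imp_bdd_above compact_imp_bounded)
  then have "0 \<le> M" and f_le: "\<And>p. p \<in> K \<Longrightarrow> \<bar>f p\<bar> \<le> M"
    unfolding M_def by (auto intro: sup_norm_on_nonneg abs_le_sup_norm_on)
  obtain g h where gh: "continuous_on UNIV g" "continuous_on UNIV h"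
    "\<And>x. \<bar>g x\<bar> \<le> M" "\<And>y. \<bar>h y\<bar> \<le> 2 * M" "\<And>p. p \<in> K \<Longrightarrow> \<bar>f p - g (fst p) - h (snd p)\<bar> \<le> 6 * \<epsilon>"
    using array_free_approximation[OF assms \<open>0 \<le> M\<close> f_le] by blast
  have "\<forall>(x, y)\<in>K. \<bar>f (x, y) - g x - h y\<bar> \<le> 6 * \<epsilon>"
    using gh(5) by fastforce
  moreover have "bounded (range g)" "bounded (range h)"
    using gh(3,4) by (auto simp: bounded_iff)
  moreover have "sup_norm_on UNIV g \<le> M" "sup_norm_on UNIV h \<le> 2 * M"
    using gh(3,4) by (auto intro: sup_norm_on_le)
  ultimately show ?thesis
    using gh(1,2) unfolding M_def by blast
qed

end
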